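(* Let $x=(\xi,r)\in X^{(n)}$ and $y=(\eta,t)\in X^{(n)}\cap(B^{\mathbb{T}_n}_r(\xi)\times(0,r))$. If $m\ge1$ is such that the chemical distance between $x$ and $y$ in $G^\prime(X^{(n)})$ is larger than $m$, then there exists a toroidal descending chain of points of $X^{(n)}$ starting from $x$ and consisting of more than $m$ points.
   Context: Fix an integer $d\ge2$ and $n\ge1$. $\mathbb{T}_n$ is the torus obtained from $[-n/2,n/2]^d$ by identifying opposite faces, with toroidal distance ${\rm d}_{\mathbb{T}_n}$ and $B^{\mathbb{T}_n}_r(\xi)=\{\eta\in\mathbb{T}_n:{\rm d}_{\mathbb{T}_n}(\xi,\eta)\le r\}$. $X^{(n)}$ is a (realization of a) finite set of points $(\xi,r)\in\mathbb{T}_n\times[0,\infty)$ (in the paper, a Poisson point process of intensity $1$ on $\mathbb{T}_n$ with i.i.d. absolutely continuous marks). $G^\prime(X^{(n)})$ has vertex set $X^{(n)}$ and a directed edge from $(\xi,r)$ to $(\eta,t)$ iff $(\eta,t)\in B^{\mathbb{T}_n}_r(\xi)\times[0,r)$ and there is no $(\zeta,w)\in X^{(n)}\cap(B^{\mathbb{T}_n}_r(\xi)\times(t,r))$ with $\eta\in B^{\mathbb{T}_n}_w(\zeta)$; chemical distance is the minimal number of edges of a path, edges traversable in either direction. Points $x_1=(\xi_1,r_1),\dots,x_m=(\xi_m,r_m)$ form a toroidal descending chain if $r_1>r_2>\dots>r_m$ and $\xi_{i+1}\in B^{\mathbb{T}_n}_{r_i}(\xi_i)$ for all $i\in\{1,\dots,m-1\}$.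 *)

theory Defs
  imports "HOL-Analysis.Analysis" "HOL-Library.Extended_Nat"
begin

text \<open>The torus T_n: points are represented by their unique representative in the
  half-open box [-n/2, n/2)^d; the toroidal distance is the minimum over all integer
  translates.\<close>

definition torus_box :: "nat \<Rightarrow> (real ^ 'd) set" where
  "torus_box n = {\<xi>. \<forall>i. - real n / 2 \<le> \<xi> $ i \<and> \<xi> $ i < real n / 2}"

definition tdist :: "nat \<Rightarrow> real ^ 'd \<Rightarrow> real ^ 'd \<Rightarrow> real" where
  "tdist n \<xi> \<eta> = Inf {norm (\<xi> - \<eta> - real n *\<^sub>R k) | k :: real ^ 'd. \<forall>i. k $ i \<in> \<int>}"

definition tball :: "nat \<Rightarrow> real ^ 'd \<Rightarrow> real \<Rightarrow> (real ^ 'd) set" where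
  "tball n \<xi> r = {\<eta> \<in> torus_box n. tdist n \<xi> \<eta> \<le> r}"

type_synonym 'd mpoint = "(real ^ 'd) \<times> real"

definition gedge :: "nat \<Rightarrow> ('d::finite) mpoint set \<Rightarrow> 'd mpoint \<Rightarrow> 'd mpoint \<Rightarrow> bool" where
  "gedge n X x y \<longleftrightarrow> x \<in> X \<and> y \<in> X \<and>
     fst y \<in> tball n (fst x) (snd x) \<and> 0 \<le> snd y \<and> snd y < snd x \<and>
     \<not> (\<exists>z\<in>X. fst z \<in> tball n (fst x) (snd x) \<and> snd y < snd z \<and> snd z < snd x
              \<and> fst y \<in> tball n (fst z) (snd z))"

definition gadj :: "nat \<Rightarrow> ('d::finite) mpoint set \<Rightarrow> ('d mpoint \<times> 'd mpoint) set" where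
  "gadj n X = {(x, y). gedge n X x y \<or> gedge n X y x}"

definition chem_dist :: "nat \<Rightarrow> ('d::finite) mpoint set \<Rightarrow> 'd mpoint \<Rightarrow> 'd mpoint \<Rightarrow> enat" where
  "chem_dist n X x y =
     (if \<exists>k. (x, y) \<in> gadj n X ^^ k then enat (LEAST k. (x, y) \<in> gadj n X ^^ k) else \<infinity>)"

definition tdesc_chain :: "nat \<Rightarrow> ('d::finite) mpoint list \<Rightarrow> bool" where
  "tdesc_chain n xs \<longleftrightarrow>
     (\<forall>i. Suc i < length xs \<longrightarrow> snd (xs ! i) > snd (xs ! Suc i)
            \<and> fst (xs ! Suc i) \<in> tball n (fst (xs ! i)) (snd (xs ! i)))"

end

theory Submission
  imports Defs
begin

text \<open>If there is no edge from u = (\<xi>, r) to a lower point v inside its ball, the definition of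
  G' provides a witness z of intermediate radius with z in the ball of u and v in the ball of z.
  Recursing on both pairs (u, z) and (z, v) and concatenating yields a descending chain from u to v
  in which consecutive points are either joined by an edge or bridged recursively, so that a path
  from u to v in G' has as many edges as the chain has steps. The recursion terminates because the
  number of points of X with radius in (snd v, snd u] strictly drops. Hence a chemical distance
  larger than m forces a descending chain with more than m points.\<close>

lemma tdesc_chain_singleton: "tdesc_chain n [x]"
  by (simp add: tdesc_chain_def)

lemma tdesc_chain_Cons_Cons:
  "tdesc_chain n (x # y # ys) \<longleftrightarrow>
     snd y < snd x \<and> fst y \<in> tball n (fst x) (snd x) \<and> tdesc_chain n (y # ys)"
proof
  assume chain: "tdesc_chain n (x # y # ys)"
  show "snd y < snd x \<and> fst y \<in> tball n (fst x) (snd x) \<and> tdesc_chain n (y # ys)"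
  proof (intro conjI)
    show "snd y < snd x" "fst y \<in> tball n (fst x) (snd x)"
      using chain unfolding tdesc_chain_def by (auto dest: spec[of _ 0])
    show "tdesc_chain n (y # ys)"
      using chain unfolding tdesc_chain_def by (auto dest: spec[of _ "Suc _"])
  qed
next
  assume "snd y < snd x \<and> fst y \<in> tball n (fst x) (snd x) \<and> tdesc_chain n (y # ys)"
  then show "tdesc_chain n (x # y # ys)"
    unfolding tdesc_chain_def by (auto simp: less_Suc_eq_0_disj)
qed

lemma tdesc_chain_append:
  assumes "tdesc_chain n xs" "xs \<noteq> []" "tdesc_chain n ys" "last xs = hd ys"
  shows "tdesc_chain n (xs @ tl ys)"
  using assms
proof (induction xs rule: induct_list012)
  case 1
  then show ?case by simp
next
  case (2 x)
  then show ?case by (cases ys) auto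
next
  case (3 x y zs)
  then show ?case by (simp add: tdesc_chain_Cons_Cons)
qed

lemma card_radius_window_less:
  fixes X :: "('a \<times> real) set"
  assumes "finite X" "a \<le> a'" "b' \<le> b" "w \<in> X" "a < snd w" "snd w \<le> b"
    and "\<not> (a' < snd w \<and> snd w \<le> b')"
  shows "card {p\<in>X. a' < snd p \<and> snd p \<le> b'} < card {p\<in>X. a < snd p \<and> snd p \<le> b}"
proof (rule psubset_card_mono)
  show "finite {p\<in>X. a < snd p \<and> snd p \<le> b}"
    using assms(1) by simp
  have "{p\<in>X. a' < snd p \<and> snd p \<le> b'} \<subseteq> {p\<in>X. a < snd p \<and> snd p \<le> b}"
    using assms(2,3) by auto
  moreover have "w \<in> {p\<in>X. a < snd p \<and> snd p \<le> b} - {p\<in>X. a' < snd p \<and> snd p \<le> b'}"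
    using assms(4-) by simp
  ultimately show "{p\<in>X. a' < snd p \<and> snd p \<le> b'} \<subset> {p\<in>X. a < snd p \<and> snd p \<le> b}"
    by blast
qed

lemma chem_dist_le_relpow:
  assumes "(x, y) \<in> gadj n X ^^ k"
  shows "chem_dist n X x y \<le> enat k"
  using assms Least_le[of "\<lambda>k. (x, y) \<in> gadj n X ^^ k"] by (auto simp: chem_dist_def)

lemma tdesc_chain_along_path:
  assumes "finite X" "\<forall>p\<in>X. 0 \<le> snd p"
    and "u \<in> X" "v \<in> X" "fst v \<in> tball n (fst u) (snd u)" "snd v < snd u"
  shows "\<exists>xs. tdesc_chain n xs \<and> set xs \<subseteq> X \<and> xs \<noteq> [] \<and> hd xs = u \<and> last xs = v
           \<and> (u, v) \<in> gadj n X ^^ (length xs - 1)"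
  using assms(3-)
proof (induction "card {p\<in>X. snd v < snd p \<and> snd p \<le> snd u}" arbitrary: u v rule: less_induct)
  case less
  show ?case
  proof (cases "gedge n X u v")
    case True
    then have "(u, v) \<in> gadj n X ^^ 1" by (simp add: gadj_def)
    with less.prems show ?thesis
      by (intro exI[of _ "[u, v]"]) (simp add: tdesc_chain_Cons_Cons tdesc_chain_singleton)
  next
    case False
    then obtain z where z: "z \<in> X" "fst z \<in> tball n (fst u) (snd u)" "snd v < snd z"
      "snd z < snd u" "fst v \<in> tball n (fst z) (snd z)"
      using less.prems assms(2) unfolding gedge_def by auto
    obtain xs where xs: "tdesc_chain n xs" "set xs \<subseteq> X" "xs \<noteq> []" "hd xs = u" "last xs = z"
      "(u, z) \<in> gadj n X ^^ (length xs - 1)"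
      using less.hyps[OF card_radius_window_less[OF assms(1) _ order_refl z(1)] less.prems(1)
          z(1,2,4)] z(3,4) by fastforce
    obtain ys where ys: "tdesc_chain n ys" "set ys \<subseteq> X" "ys \<noteq> []" "hd ys = z" "last ys = v"
      "(z, v) \<in> gadj n X ^^ (length ys - 1)"
      using less.hyps[OF card_radius_window_less[OF assms(1) order_refl _ less.prems(1)] z(1)
          less.prems(2) z(5,3)] z(3,4) by fastforce
    have "tl ys \<noteq> []"
      using ys(3-5) z(3) by (cases ys) auto
    then have last: "last (xs @ tl ys) = v" and "set (tl ys) \<subseteq> X"
      using ys(2,3,5) by (cases ys; simp)+
    have "length (xs @ tl ys) - 1 = (length xs - 1) + (length ys - 1)"
      using xs(3) ys(3) by (cases xs; cases ys) auto
    then have "(u, v) \<in> gadj n X ^^ (length (xs @ tl ys) - 1)"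
      using xs(6) ys(6) by (auto simp: relpow_add)
    with tdesc_chain_append[OF xs(1,3) ys(1)] show ?thesis
      using xs(2-5) ys(4) last \<open>set (tl ys) \<subseteq> X\<close> by (intro exI[of _ "xs @ tl ys"]) auto
  qed
qed

theorem lemma5p2:
  fixes X :: "('d::finite) mpoint set" and n m :: nat and \<xi> \<eta> :: "real ^ 'd" and r t :: real
  assumes "CARD('d) \<ge> 2" and "n \<ge> 1"
    and "finite X"
    and "\<forall>p\<in>X. fst p \<in> torus_box n \<and> snd p \<ge> 0"
    and "(\<xi>, r) \<in> X" and "(\<eta>, t) \<in> X"
    and "\<eta> \<in> tball n \<xi> r" and "0 < t" and "t < r"
    and "m \<ge> 1"
    and "chem_dist n X (\<xi>, r) (\<eta>, t) > enat m"
  shows "\<exists>xs. tdesc_chain n xs \<and> set xs \<subseteq> X \<and> xs \<noteq> [] \<and> hd xs = (\<xi>, r)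
              \<and> length xs > m"
proof -
  obtain xs where xs: "tdesc_chain n xs" "set xs \<subseteq> X" "xs \<noteq> []" "hd xs = (\<xi>, r)"
    "((\<xi>, r), (\<eta>, t)) \<in> gadj n X ^^ (length xs - 1)"
    using tdesc_chain_along_path[OF assms(3) _ assms(5,6), where n = n] assms(4,7,9) by auto
  have "enat m < enat (length xs - 1)"
    using assms(11) chem_dist_le_relpow[OF xs(5)] by (rule less_le_trans)
  with xs(1-4) show ?thesis by auto
qed

end
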